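(* Let $c,\ell,N\in\mathbb{N}_+$ and let the maximum pooling layer map $w^{i-1}=(w^{i-1}_1,\dots,w^{i-1}_{\ell N})$, $w^{i-1}_m\in\mathbb{R}^c$, to $w^i=(w^i_1,\dots,w^i_N)$ with $w^i_k=\max_{j=1,\dots,\ell}w^{i-1}_{\ell(k-1)+j}$, the maximum taken entrywise (channel-wise). Let $\Sigma\in\mathbb{R}^{c\times c}$ be diagonal and positive definite. Then for all inputs $w^{i-1}_a,w^{i-1}_b$ and every $k=1,\dots,N$, $$-(w^i_{a,k}-w^i_{b,k})^\top\Sigma(w^i_{a,k}-w^i_{b,k})+\sum_{j=1}^{\ell}\big(w^{i-1}_{a,\ell(k-1)+j}-w^{i-1}_{b,\ell(k-1)+j}\big)^\top\Sigma\big(w^{i-1}_{a,\ell(k-1)+j}-w^{i-1}_{b,\ell(k-1)+j}\big)\ge 0.$$ Consequently, with $\underline{w}$ denoting the column-wise stacked vector, the layer satisfies $$\begin{bmatrix}\underline{w}_a^i-\underline{w}_b^i\\ \underline{w}_a^{i-1}-\underline{w}_b^{i-1}\end{bmatrix}^\top\begin{bmatrix}Q & 0\\ 0 & R\end{bmatrix}\begin{bmatrix}\underline{w}_a^i-\underline{w}_b^i\\ \underline{w}_a^{i-1}-\underline{w}_b^{i-1}\end{bmatrix}\ge0$$ for all inputs, with $Q=-\mathrm{blkdiag}(\Sigma,\dots,\Sigma)$ ($N$ blocks) and $R=\mathrm{blkdiag}(\Sigma,\dots,\Sigma)$ ($\ell N$ blocks).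
   Context: For a sequence $w=(w_1,\dots,w_M)$ of vectors in $\mathbb{R}^c$, the column-wise stacked vector is $\underline{w}=(w_1^\top,\dots,w_M^\top)^\top$. *)

theory Defs
  imports Complex_Main
begin

text \<open>Conventions (0-indexed). A sequence of M vectors in R^c is a function
  w :: nat \<Rightarrow> nat \<Rightarrow> real, where w m r is channel r (r < c) of vector m (m < M).
  Vectors in R^n are functions nat \<Rightarrow> real, only entries i < n matter.\<close>

definition quad_form :: "nat \<Rightarrow> (nat \<Rightarrow> nat \<Rightarrow> real) \<Rightarrow> (nat \<Rightarrow> real) \<Rightarrow> real" where
  "quad_form n A x = (\<Sum>i<n. \<Sum>j<n. x i * A i j * x j)"

definition diagonal_mat :: "nat \<Rightarrow> (nat \<Rightarrow> nat \<Rightarrow> real) \<Rightarrow> bool" where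
  "diagonal_mat n A \<longleftrightarrow> (\<forall>i<n. \<forall>j<n. i \<noteq> j \<longrightarrow> A i j = 0)"

definition symmetric_mat :: "nat \<Rightarrow> (nat \<Rightarrow> nat \<Rightarrow> real) \<Rightarrow> bool" where
  "symmetric_mat n A \<longleftrightarrow> (\<forall>i<n. \<forall>j<n. A i j = A j i)"

definition pos_def :: "nat \<Rightarrow> (nat \<Rightarrow> nat \<Rightarrow> real) \<Rightarrow> bool" where
  "pos_def n A \<longleftrightarrow> symmetric_mat n A \<and>
     (\<forall>x. (\<exists>i<n. x i \<noteq> 0) \<longrightarrow> quad_form n A x > 0)"

definition maxpool :: "nat \<Rightarrow> (nat \<Rightarrow> nat \<Rightarrow> real) \<Rightarrow> (nat \<Rightarrow> nat \<Rightarrow> real)" where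
  "maxpool l w = (\<lambda>k r. Max {w (l * k + j) r | j. j < l})"

definition stack :: "nat \<Rightarrow> (nat \<Rightarrow> nat \<Rightarrow> real) \<Rightarrow> (nat \<Rightarrow> real)" where
  "stack c w = (\<lambda>i. w (i div c) (i mod c))"

text \<open>blkdiag(S,...,S) with blocks of size c (number of blocks determined by the
  ambient dimension in which it is used).\<close>
definition blkdiag :: "nat \<Rightarrow> (nat \<Rightarrow> nat \<Rightarrow> real) \<Rightarrow> (nat \<Rightarrow> nat \<Rightarrow> real)" where
  "blkdiag c S = (\<lambda>i j. if i div c = j div c then S (i mod c) (j mod c) else 0)"

definition blk2 :: "nat \<Rightarrow> (nat \<Rightarrow> nat \<Rightarrow> real) \<Rightarrow> (nat \<Rightarrow> nat \<Rightarrow> real) \<Rightarrow> (nat \<Rightarrow> nat \<Rightarrow> real)" where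
  "blk2 n A B = (\<lambda>i j. if i < n \<and> j < n then A i j
                      else if n \<le> i \<and> n \<le> j then B (i - n) (j - n) else 0)"

definition vcat :: "nat \<Rightarrow> (nat \<Rightarrow> real) \<Rightarrow> (nat \<Rightarrow> real) \<Rightarrow> (nat \<Rightarrow> real)" where
  "vcat n x y = (\<lambda>i. if i < n then x i else y (i - n))"

end

theory Submission
  imports Defs
begin

text \<open>Maximum pooling is 1-Lipschitz in every channel: the difference of the maxima over a pool is
  bounded by the difference at the index where the larger of the two maxima is attained. Squaring,
  weighting with the positive diagonal of \<Sigma> and summing over the channels gives the inequality for
  a single pool; the stacked inequality is its sum over all pools, because the quadratic forms of
  block-diagonal matrices split into sums over their blocks.\<close>

lemma sum_lessThan_add:
  fixes f :: "nat \<Rightarrow> 'a::comm_monoid_add"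
  shows "(\<Sum>i<m + n. f i) = (\<Sum>i<m. f i) + (\<Sum>j<n. f (m + j))"
  by (induction n) (simp_all add: add_ac)

lemma sum_lessThan_mult_blocks:
  fixes f :: "nat \<Rightarrow> 'a::comm_monoid_add"
  shows "(\<Sum>i<c * M. f i) = (\<Sum>m<M. \<Sum>r<c. f (c * m + r))"
proof (induction M)
  case (Suc M)
  have "c * Suc M = c * M + c" by simp
  then show ?case using Suc by (simp only: sum_lessThan_add) simp
qed simp

lemma Max_image_diff_le:
  fixes f g :: "'a \<Rightarrow> real"
  assumes "finite S" and "S \<noteq> {}"
  obtains j where "j \<in> S" and "\<bar>Max (f ` S) - Max (g ` S)\<bar> \<le> \<bar>f j - g j\<bar>"
proof -
  have attained: "\<exists>j\<in>S. \<bar>Max (f ` S) - Max (g ` S)\<bar> \<le> \<bar>f j - g j\<bar>"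
    if le: "Max (g ` S) \<le> Max (f ` S)" for f g :: "'a \<Rightarrow> real"
  proof -
    have "Max (f ` S) \<in> f ` S" using assms by simp
    then obtain j where j: "j \<in> S" "Max (f ` S) = f j" by auto
    have "g j \<le> Max (g ` S)" using assms j(1) by simp
    with le j show ?thesis by force
  qed
  show thesis
    using attained[of g f] attained[of f g] that
    by (cases "Max (g ` S) \<le> Max (f ` S)") (auto simp: abs_minus_commute)
qed

lemma maxpool_diff_sq_le:
  assumes "l > 0"
  shows "(maxpool l wa k r - maxpool l wb k r)\<^sup>2
         \<le> (\<Sum>j<l. (wa (l * k + j) r - wb (l * k + j) r)\<^sup>2)"
proof -
  have pool: "{w (l * k + j) r | j. j < l} = (\<lambda>j. w (l * k + j) r) ` {..<l}"
    for w :: "nat \<Rightarrow> nat \<Rightarrow> real" by auto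
  obtain j where "j < l" and
    "\<bar>maxpool l wa k r - maxpool l wb k r\<bar> \<le> \<bar>wa (l * k + j) r - wb (l * k + j) r\<bar>"
    using Max_image_diff_le[of "{..<l}" "\<lambda>j. wa (l * k + j) r" "\<lambda>j. wb (l * k + j) r"] assms
    unfolding maxpool_def pool by auto
  then have "(maxpool l wa k r - maxpool l wb k r)\<^sup>2 \<le> (wa (l * k + j) r - wb (l * k + j) r)\<^sup>2"
    by (simp add: abs_le_square_iff)
  also have "\<dots> \<le> (\<Sum>j<l. (wa (l * k + j) r - wb (l * k + j) r)\<^sup>2)"
    using \<open>j < l\<close> by (intro member_le_sum) auto
  finally show ?thesis .
qed

lemma quad_form_diagonal:
  assumes "diagonal_mat n A"
  shows "quad_form n A x = (\<Sum>i<n. A i i * (x i)\<^sup>2)"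
  unfolding quad_form_def
proof (rule sum.cong[OF refl])
  fix i assume i: "i \<in> {..<n}"
  have "(\<Sum>j<n. x i * A i j * x j) = (\<Sum>j<n. if j = i then x i * A i i * x i else 0)"
    using assms i unfolding diagonal_mat_def by (intro sum.cong) auto
  also have "\<dots> = A i i * (x i)\<^sup>2" using i by (simp add: power2_eq_square)
  finally show "(\<Sum>j<n. x i * A i j * x j) = A i i * (x i)\<^sup>2" .
qed

lemma quad_form_unit_vector:
  assumes "i < n"
  shows "quad_form n A (\<lambda>j. if j = i then 1 else 0) = A i i"
  using assms
  by (simp add: quad_form_def if_distrib[of "\<lambda>x. x * _"] if_distrib[of "\<lambda>x. _ * x"] cong: if_cong)

lemma pos_def_diagonal_pos:
  assumes "pos_def n A" and "i < n"
  shows "A i i > 0"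
proof -
  have "\<exists>j<n. (if j = i then 1 else 0 :: real) \<noteq> 0" using assms(2) by auto
  then have "quad_form n A (\<lambda>j. if j = i then 1 else 0) > 0"
    using assms(1) unfolding pos_def_def by (blast dest: spec[of _ "\<lambda>j. if j = i then 1 else 0"])
  then show ?thesis using quad_form_unit_vector[OF assms(2)] by simp
qed

lemma quad_form_uminus: "quad_form n (\<lambda>i j. - A i j) x = - quad_form n A x"
  by (simp add: quad_form_def sum_negf)

lemma quad_form_blk2:
  "quad_form (n + m) (blk2 n A B) (vcat n x y) = quad_form n A x + quad_form m B y"
  by (simp add: quad_form_def sum_lessThan_add blk2_def vcat_def)

lemma quad_form_blkdiag_stack:
  "quad_form (c * M) (blkdiag c S) (stack c w) = (\<Sum>m<M. quad_form c S (w m))"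
proof -
  have block: "(\<Sum>m'<M. \<Sum>s<c. stack c w (c * m + r) * blkdiag c S (c * m + r) (c * m' + s)
                   * stack c w (c * m' + s))
             = (\<Sum>s<c. w m r * S r s * w m s)" if "m < M" and "r < c" for m r
  proof -
    have "(\<Sum>m'<M. \<Sum>s<c. stack c w (c * m + r) * blkdiag c S (c * m + r) (c * m' + s)
                   * stack c w (c * m' + s))
        = (\<Sum>m'<M. if m = m' then (\<Sum>s<c. w m r * S r s * w m s) else 0)"
      using \<open>r < c\<close> by (intro sum.cong) (auto simp: blkdiag_def stack_def)
    then show ?thesis using \<open>m < M\<close> by simp
  qed
  show ?thesis
    unfolding quad_form_def sum_lessThan_mult_blocks by (simp add: block)
qed

lemma maxpool_quad_form_le:
  assumes "l > 0" and "diagonal_mat c S" and "\<And>r. r < c \<Longrightarrow> 0 \<le> S r r"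
  shows "quad_form c S (\<lambda>r. maxpool l wa k r - maxpool l wb k r)
         \<le> (\<Sum>j<l. quad_form c S (\<lambda>r. wa (l * k + j) r - wb (l * k + j) r))"
proof -
  have "quad_form c S (\<lambda>r. maxpool l wa k r - maxpool l wb k r)
        \<le> (\<Sum>r<c. S r r * (\<Sum>j<l. (wa (l * k + j) r - wb (l * k + j) r)\<^sup>2))"
    unfolding quad_form_diagonal[OF assms(2)]
    using assms(3) maxpool_diff_sq_le[OF assms(1)] by (intro sum_mono mult_left_mono) auto
  also have "\<dots> = (\<Sum>j<l. quad_form c S (\<lambda>r. wa (l * k + j) r - wb (l * k + j) r))"
    unfolding quad_form_diagonal[OF assms(2)] by (simp add: sum_distrib_left sum.swap[of _ "{..<l}"])
  finally show ?thesis .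
qed

theorem lemma9:
  fixes c l N :: nat
    and \<Sigma> :: "nat \<Rightarrow> nat \<Rightarrow> real"
  assumes "c > 0" and "l > 0" and "N > 0"
    and "diagonal_mat c \<Sigma>" and "pos_def c \<Sigma>"
  shows "(\<forall>wa wb :: nat \<Rightarrow> nat \<Rightarrow> real. \<forall>k<N.
            - quad_form c \<Sigma> (\<lambda>r. maxpool l wa k r - maxpool l wb k r)
            + (\<Sum>j<l. quad_form c \<Sigma> (\<lambda>r. wa (l * k + j) r - wb (l * k + j) r)) \<ge> 0)
       \<and> (\<forall>wa wb :: nat \<Rightarrow> nat \<Rightarrow> real.
            quad_form (c * N + c * (l * N))
              (blk2 (c * N) (\<lambda>i j. - blkdiag c \<Sigma> i j) (blkdiag c \<Sigma>))
              (vcat (c * N)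
                 (\<lambda>i. stack c (maxpool l wa) i - stack c (maxpool l wb) i)
                 (\<lambda>i. stack c wa i - stack c wb i)) \<ge> 0)"
proof -
  define Q where "Q wa wb k = quad_form c \<Sigma> (\<lambda>r. maxpool l wa k r - maxpool l wb k r)" for wa wb k
  define R where "R wa wb m = quad_form c \<Sigma> (\<lambda>r. wa m r - wb m r)"
    for wa wb :: "nat \<Rightarrow> nat \<Rightarrow> real" and m
  have pool: "Q wa wb k \<le> (\<Sum>j<l. R wa wb (l * k + j))" for wa wb k
    unfolding Q_def R_def using assms(2,4) pos_def_diagonal_pos[OF assms(5)]
    by (intro maxpool_quad_form_le) (auto intro: less_imp_le)
  have stacked: "quad_form (c * N + c * (l * N))
                   (blk2 (c * N) (\<lambda>i j. - blkdiag c \<Sigma> i j) (blkdiag c \<Sigma>))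
                   (vcat (c * N)
                     (\<lambda>i. stack c (maxpool l wa) i - stack c (maxpool l wb) i)
                     (\<lambda>i. stack c wa i - stack c wb i))
                 = (\<Sum>k<N. - Q wa wb k + (\<Sum>j<l. R wa wb (l * k + j)))" for wa wb
  proof -
    have diff: "(\<lambda>i. stack c u i - stack c v i) = stack c (\<lambda>m r. u m r - v m r)" for u v
      by (simp add: stack_def)
    show ?thesis
      unfolding diff quad_form_blk2 quad_form_uminus quad_form_blkdiag_stack
        sum_lessThan_mult_blocks[of _ l N] Q_def R_def
      by (simp add: sum_subtractf)
  qed
  show ?thesis
    using pool by (auto simp: stacked Q_def R_def intro!: sum_nonneg)
qed

end
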